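(* Let $\omega\in\widehat{\mathcal D}$ and $\alpha>0$, and set $\mu=\omega\,\widehat\omega^{\alpha-1}$. Then $\mu\in\widehat{\mathcal D}$ and $\mu_x\asymp\omega_x^\alpha$ for all $x\ge1$.
   Context: A radial weight is a nonnegative $\omega\in L^1([0,1))$, extended by $\omega(z)=\omega(|z|)$; $\widehat\omega(r)=\int_r^1\omega(s)ds>0$ for all $r\in[0,1)$. $\omega\in\widehat{\mathcal D}$ means $\widehat\omega(r)\le C\widehat\omega(\frac{1+r}2)$ for some $C>0$ and all $0\le r<1$. Moments: $\omega_x=\int_0^1r^x\omega(r)dr$. $A\asymp B$ means comparability with constants independent of $x$. *)

theory Defs
  imports "HOL-Analysis.Analysis"
begin

text \<open>Radial weights are represented by their profile on [0,1).\<close>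

definition omega_hat :: "(real \<Rightarrow> real) \<Rightarrow> real \<Rightarrow> real" where
  "omega_hat \<omega> r = (LBINT s:{r..<1}. \<omega> s)"

definition radial_weight :: "(real \<Rightarrow> real) \<Rightarrow> bool" where
  "radial_weight \<omega> \<longleftrightarrow>
     (\<forall>r\<in>{0..<1}. 0 \<le> \<omega> r) \<and>
     set_integrable lborel {0..<1} \<omega> \<and>
     (\<forall>r\<in>{0..<1}. omega_hat \<omega> r > 0)"

definition D_hat :: "(real \<Rightarrow> real) \<Rightarrow> bool" where
  "D_hat \<omega> \<longleftrightarrow> radial_weight \<omega> \<and>
     (\<exists>C>0. \<forall>r\<in>{0..<1}. omega_hat \<omega> r \<le> C * omega_hat \<omega> ((1 + r) / 2))"

definition moment :: "(real \<Rightarrow> real) \<Rightarrow> real \<Rightarrow> real" where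
  "moment \<omega> x = (LBINT s:{0..<1}. s powr x * \<omega> s)"

end

(*
  For \<omega> in D-hat the moments are governed by the tail: \<omega>_x \<asymp> \<omega>-hat(1 - 1/x).
  From below, s^x \<ge> e^-1 on [1 - 1/(2x), 1) and one doubling step suffice.  From above,
  s^x \<le> exp(-2^k) to the left of 1 - 2^k/x, while k + 1 doubling steps give
  \<omega>-hat(1 - 2^(k+1)/x) \<le> C^(k+1) \<omega>-hat(1 - 1/x), and \<Sum>k exp(-2^k) C^(k+1) converges.

  The tail \<omega>-hat is continuous and nonincreasing, so the substitution t = \<omega>-hat(s) is available:
  the image of \<omega>(s) ds on [r,1) under \<omega>-hat is Lebesgue measure on [0, \<omega>-hat(r)].  Hence
  \<mu>-hat(r) = \<omega>-hat(r)^\<alpha> / \<alpha>, so \<mu> inherits the doubling condition with constant C^\<alpha>, and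
  \<mu>_x \<asymp> \<mu>-hat(1 - 1/x) \<asymp> \<omega>-hat(1 - 1/x)^\<alpha> \<asymp> \<omega>_x^\<alpha>.
*)
theory Submission
  imports Defs
begin

section \<open>Tails and moments of radial weights\<close>

(* Extending by zero outside [0,1) turns tails and moments into Henstock-Kurzweil integrals
   over closed intervals. *)
definition zero_ext :: "(real \<Rightarrow> real) \<Rightarrow> real \<Rightarrow> real" where
  "zero_ext \<nu> s = indicator {0..<1} s * \<nu> s"

lemma zero_ext_nonneg: "radial_weight \<nu> \<Longrightarrow> 0 \<le> zero_ext \<nu> s"
  by (auto simp: radial_weight_def zero_ext_def indicator_def)

lemma integrable_zero_ext: "radial_weight \<nu> \<Longrightarrow> integrable lborel (zero_ext \<nu>)"
  unfolding radial_weight_def set_integrable_def zero_ext_def by simp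

lemma borel_measurable_zero_ext [measurable]:
  "radial_weight \<nu> \<Longrightarrow> zero_ext \<nu> \<in> borel_measurable borel"
  using borel_measurable_integrable[OF integrable_zero_ext] by simp

lemma zero_ext_integrable_on:
  assumes "radial_weight \<nu>" shows "zero_ext \<nu> integrable_on {a..b}"
proof -
  have "set_integrable lborel {a..b} (zero_ext \<nu>)"
    unfolding set_integrable_def using integrable_zero_ext[OF assms]
    by (intro integrable_mult_indicator) auto
  then show ?thesis by (rule set_borel_integral_eq_integral(1))
qed

lemma omega_hat_eq_integral:
  assumes "radial_weight \<nu>" "0 \<le> r"
  shows "omega_hat \<nu> r = integral {r..1} (zero_ext \<nu>)"
proof -
  have "set_integrable lborel {r..1} (zero_ext \<nu>)"
    unfolding set_integrable_def using integrable_zero_ext[OF assms(1)]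
    by (intro integrable_mult_indicator) auto
  moreover have "omega_hat \<nu> r = (LBINT s:{r..1}. zero_ext \<nu> s)"
    unfolding omega_hat_def set_lebesgue_integral_def
    by (rule Bochner_Integration.integral_cong) (use assms(2) in \<open>auto simp: zero_ext_def indicator_def\<close>)
  ultimately show ?thesis
    by (simp add: set_borel_integral_eq_integral(2))
qed

lemma omega_hat_nonneg:
  assumes "radial_weight \<nu>" "0 \<le> r" shows "0 \<le> omega_hat \<nu> r"
  unfolding omega_hat_eq_integral[OF assms]
  by (intro integral_nonneg zero_ext_integrable_on zero_ext_nonneg assms(1))

lemma omega_hat_one [simp]: "omega_hat \<nu> 1 = 0"
  by (simp add: omega_hat_def set_lebesgue_integral_def)

lemma omega_hat_split:
  assumes "radial_weight \<nu>" "0 \<le> a" "a \<le> b" "b \<le> 1"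
  shows "omega_hat \<nu> a = integral {a..b} (zero_ext \<nu>) + omega_hat \<nu> b"
  using Henstock_Kurzweil_Integration.integral_combine[OF assms(3,4) zero_ext_integrable_on[OF assms(1)]] assms
  by (simp add: omega_hat_eq_integral)

lemma omega_hat_antimono:
  assumes "radial_weight \<nu>" "0 \<le> a" "a \<le> b" "b \<le> 1"
  shows "omega_hat \<nu> b \<le> omega_hat \<nu> a"
proof -
  have "0 \<le> integral {a..b} (zero_ext \<nu>)"
    by (intro integral_nonneg zero_ext_integrable_on zero_ext_nonneg assms(1))
  then show ?thesis using omega_hat_split[OF assms] by simp
qed

lemma continuous_on_omega_hat:
  assumes "radial_weight \<nu>" shows "continuous_on {0..1} (omega_hat \<nu>)"
proof -
  have "continuous_on {0..1} (\<lambda>x. integral {0..1} (zero_ext \<nu>) - integral {0..x} (zero_ext \<nu>))"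
    by (intro continuous_intros indefinite_integral_continuous_1 zero_ext_integrable_on assms)
  moreover have "omega_hat \<nu> x = integral {0..1} (zero_ext \<nu>) - integral {0..x} (zero_ext \<nu>)"
    if "x \<in> {0..1}" for x
    using omega_hat_split[OF assms, of 0 x] that by (simp add: omega_hat_eq_integral[OF assms])
  ultimately show ?thesis by (metis (no_types, lifting) continuous_on_cong)
qed

lemma set_integrable_moment:
  assumes "radial_weight \<nu>" "0 \<le> x"
  shows "set_integrable lborel {0..1} (\<lambda>s. s powr x * zero_ext \<nu> s)"
proof (rule set_integrable_bound[where f="zero_ext \<nu>"])
  show "set_integrable lborel {0..1} (zero_ext \<nu>)"
    unfolding set_integrable_def using integrable_zero_ext[OF assms(1)]
    by (intro integrable_mult_indicator) auto
  show "set_borel_measurable lborel {0..1} (\<lambda>s. s powr x * zero_ext \<nu> s)"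
    unfolding set_borel_measurable_def using assms(1) by measurable
  show "AE s in lborel. s \<in> {0..1} \<longrightarrow> norm (s powr x * zero_ext \<nu> s) \<le> norm (zero_ext \<nu> s)"
    using assms zero_ext_nonneg[OF assms(1)]
    by (intro AE_I2) (auto simp: abs_mult intro!: mult_left_le_one_le powr_le1)
qed

lemma moment_eq_integral:
  assumes "radial_weight \<nu>" "0 \<le> x"
  shows "moment \<nu> x = integral {0..1} (\<lambda>s. s powr x * zero_ext \<nu> s)"
proof -
  have "moment \<nu> x = (LBINT s:{0..1}. s powr x * zero_ext \<nu> s)"
    unfolding moment_def set_lebesgue_integral_def
    by (rule Bochner_Integration.integral_cong) (auto simp: zero_ext_def indicator_def)
  then show ?thesis
    by (simp add: set_borel_integral_eq_integral(2)[OF set_integrable_moment[OF assms]])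
qed

lemma moment_integrable_on:
  "radial_weight \<nu> \<Longrightarrow> 0 \<le> x \<Longrightarrow> (\<lambda>s. s powr x * zero_ext \<nu> s) integrable_on {0..1}"
  using set_integrable_moment set_borel_integral_eq_integral(1) by blast

lemma moment_nonneg:
  assumes "radial_weight \<nu>" "0 \<le> x" shows "0 \<le> moment \<nu> x"
  unfolding moment_eq_integral[OF assms]
  by (intro integral_nonneg moment_integrable_on assms mult_nonneg_nonneg zero_ext_nonneg) auto

section \<open>Moments of doubling weights\<close>

lemma summable_exp_neg_two_power_mult_power:
  fixes C :: real shows "summable (\<lambda>k::nat. exp (- (2 ^ k)) * C ^ (k + 1))"
proof -
  obtain N :: nat where N: "2 * \<bar>C\<bar> \<le> real N" using real_arch_simple by blast
  have "norm (exp (- (2 ^ Suc n)) * C ^ (Suc n + 1)) \<le> 1/2 * norm (exp (- (2 ^ n)) * C ^ (n + 1))"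
    if "N \<le> n" for n
  proof -
    have "real n \<le> 2 ^ n"
      using less_exp[of n] by (metis less_imp_le of_nat_le_iff of_nat_numeral of_nat_power)
    also have "(2::real) ^ n \<le> exp (2 ^ n)" using exp_ge_add_one_self[of "2 ^ n"] by linarith
    finally have "2 * \<bar>C\<bar> \<le> exp (2 ^ n)" using N that by linarith
    then have "\<bar>C\<bar> * exp (- (2 ^ n)) \<le> 1/2" by (simp add: exp_minus field_simps)
    moreover have "norm (exp (- (2 ^ Suc n)) * C ^ (Suc n + 1))
        = (\<bar>C\<bar> * exp (- (2 ^ n))) * norm (exp (- (2 ^ n)) * C ^ (n + 1))"
      by (simp add: abs_mult power_abs mult_exp_exp)
    ultimately show ?thesis by (metis mult_right_mono norm_ge_zero)
  qed
  then show ?thesis by (intro summable_ratio_test[where c="1/2" and N=N]) auto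
qed

lemma exp_neg_one_le_powr:
  fixes x :: real assumes "1 \<le> x" shows "exp (-1) \<le> (1 - 1 / (2 * x)) powr x"
proof -
  define u where "u = 1 / (2 * x)"
  have u: "0 \<le> u" "u \<le> 1/2" using assms by (auto simp: u_def field_simps)
  have "-1 \<le> x * (- u - 2 * u\<^sup>2)"
    using assms by (simp add: u_def power2_eq_square field_simps)
  also have "\<dots> \<le> x * ln (1 - u)"
    using ln_one_minus_pos_lower_bound[OF u] assms by (intro mult_left_mono) auto
  finally have "exp (-1) \<le> exp (x * ln (1 - u))" by simp
  also have "\<dots> = (1 - u) powr x" using u by (simp add: powr_def mult.commute)
  finally show ?thesis by (simp add: u_def)
qed

lemma powr_le_exp_neg:
  fixes s x t :: real
  assumes "0 \<le> s" "0 < x" "s \<le> 1 - t / x"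
  shows "s powr x \<le> exp (- t)"
proof (cases "s = 0")
  case False
  have "x * ln s \<le> x * (s - 1)"
    using assms False by (intro mult_left_mono ln_le_minus_one) auto
  also have "\<dots> \<le> - t" using assms by (simp add: field_simps)
  finally show ?thesis using assms False by (simp add: powr_def mult.commute)
qed simp

lemma omega_hat_le_moment:
  assumes rw: "radial_weight \<nu>" and "0 \<le> C"
    and doubling: "\<forall>r\<in>{0..<1}. omega_hat \<nu> r \<le> C * omega_hat \<nu> ((1 + r) / 2)"
    and x: "1 \<le> x"
  shows "omega_hat \<nu> (1 - 1/x) \<le> C * exp 1 * moment \<nu> x"
proof -
  define b where "b = 1 - 1 / (2 * x)"
  have b: "1/2 \<le> b" "b \<le> 1" using x by (auto simp: b_def field_simps)
  have x0: "0 \<le> x" using x by simp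
  have "exp (-1) * omega_hat \<nu> b = integral {b..1} (\<lambda>s. exp (-1) * zero_ext \<nu> s)"
    using b by (simp add: omega_hat_eq_integral[OF rw])
  also have "\<dots> \<le> integral {b..1} (\<lambda>s. s powr x * zero_ext \<nu> s)"
  proof (rule integral_le)
    show "(\<lambda>s. s powr x * zero_ext \<nu> s) integrable_on {b..1}"
      by (rule integrable_on_subinterval[OF moment_integrable_on[OF rw x0]]) (use b in auto)
    show "exp (-1) * zero_ext \<nu> s \<le> s powr x * zero_ext \<nu> s" if "s \<in> {b..1}" for s
    proof (intro mult_right_mono zero_ext_nonneg rw)
      have "exp (-1) \<le> b powr x" unfolding b_def by (rule exp_neg_one_le_powr[OF x])
      also have "\<dots> \<le> s powr x" using that b x0 by (intro powr_mono2) auto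
      finally show "exp (-1) \<le> s powr x" .
    qed
  qed (intro integrable_on_mult_right zero_ext_integrable_on rw)
  also have "\<dots> \<le> integral {0..1} (\<lambda>s. s powr x * zero_ext \<nu> s)"
    using b zero_ext_nonneg[OF rw]
    by (intro integral_subset_le integrable_on_subinterval[OF moment_integrable_on[OF rw x0]]
        moment_integrable_on[OF rw x0]) auto
  also have "\<dots> = moment \<nu> x" by (rule moment_eq_integral[OF rw x0, symmetric])
  finally have "omega_hat \<nu> b \<le> exp 1 * moment \<nu> x"
    by (simp add: exp_minus field_simps)
  moreover have "omega_hat \<nu> (1 - 1/x) \<le> C * omega_hat \<nu> b"
    using doubling[rule_format, of "1 - 1/x"] x by (simp add: b_def field_simps)
  ultimately show ?thesis using \<open>0 \<le> C\<close> by (metis mult.assoc mult_left_mono order_trans)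
qed

lemma omega_hat_iterated_doubling:
  assumes rw: "radial_weight \<nu>" and "0 \<le> C"
    and doubling: "\<forall>r\<in>{0..<1}. omega_hat \<nu> r \<le> C * omega_hat \<nu> ((1 + r) / 2)"
    and x: "1 \<le> x"
  shows "omega_hat \<nu> (max 0 (1 - 2 ^ j / x)) \<le> C ^ j * omega_hat \<nu> (1 - 1/x)"
proof (induction j)
  case 0
  then show ?case using x by simp
next
  case (Suc j)
  define m where "m j = max 0 (1 - 2 ^ j / x)" for j
  have m: "0 \<le> m j" "m j < 1" for j using x by (auto simp: m_def)
  have "m j \<le> (1 + m (Suc j)) / 2"
  proof (cases "2 ^ Suc j \<le> x")
    case True
    then show ?thesis using x by (simp add: m_def field_simps)
  next
    case False
    then have "1 - 2 ^ j / x \<le> 1/2" using x by (simp add: field_simps)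
    then have "m j \<le> 1/2" unfolding m_def by linarith
    moreover have "0 \<le> m (Suc j)" by (simp add: m_def)
    ultimately show ?thesis by simp
  qed
  then have "omega_hat \<nu> ((1 + m (Suc j)) / 2) \<le> omega_hat \<nu> (m j)"
    using m[of j] m[of "Suc j"] by (intro omega_hat_antimono rw) auto
  then have "omega_hat \<nu> (m (Suc j)) \<le> C * omega_hat \<nu> (m j)"
    using doubling m[of "Suc j"] \<open>0 \<le> C\<close> by (meson atLeastLessThan_iff mult_left_mono order_trans)
  also have "\<dots> \<le> C * (C ^ j * omega_hat \<nu> (1 - 1/x))"
    using Suc.IH \<open>0 \<le> C\<close> by (intro mult_left_mono) (auto simp: m_def)
  finally show ?case by (simp add: m_def mult.assoc)
qed

lemma powr_le_dyadic_step_sum: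
  fixes x s :: real
  assumes x: "1 \<le> x" "x < 2 ^ J" and s: "0 \<le> s" "s < 1"
  shows "s powr x \<le> of_bool (1 - 1/x \<le> s)
           + (\<Sum>k<J. exp (- (2 ^ k)) * of_bool (1 - 2 ^ Suc k / x \<le> s))"
proof (cases "1 - 1/x \<le> s")
  case True
  have "s powr x \<le> 1" using x s by (intro powr_le1) auto
  moreover have "0 \<le> (\<Sum>k<J. exp (- ((2::real) ^ k)) * of_bool (1 - 2 ^ Suc k / x \<le> s))"
    by (intro sum_nonneg) auto
  ultimately show ?thesis using True by simp
next
  case False
  define L where "L = (LEAST j. 1 - 2 ^ j / x \<le> s)"
  have "1 < 2 ^ J / x" using x by (simp add: field_simps)
  then have "1 - 2 ^ J / x \<le> s" using s by linarith
  then have L: "1 - 2 ^ L / x \<le> s" "L \<le> J"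
    unfolding L_def by (auto intro: LeastI Least_le)
  then obtain k where k: "L = Suc k" using False by (cases L) auto
  have "s < 1 - 2 ^ k / x"
    using not_less_Least[of k "\<lambda>j. 1 - 2 ^ j / x \<le> s"] k by (simp add: L_def)
  then have "s powr x \<le> exp (- (2 ^ k))" using x s by (intro powr_le_exp_neg) auto
  also have "\<dots> = exp (- (2 ^ k)) * of_bool (1 - 2 ^ Suc k / x \<le> s)" using L k by simp
  also have "\<dots> \<le> (\<Sum>k<J. exp (- (2 ^ k)) * of_bool (1 - 2 ^ Suc k / x \<le> s))"
    using L k by (intro member_le_sum[of k]) auto
  finally show ?thesis by simp
qed

lemma has_integral_zero_ext_upper_tail:
  assumes rw: "radial_weight \<nu>" and "c \<le> 1"
  shows "((\<lambda>s. of_bool (c \<le> s) * zero_ext \<nu> s) has_integral omega_hat \<nu> (max 0 c)) {0..1}"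
proof -
  have "(zero_ext \<nu> has_integral omega_hat \<nu> (max 0 c)) {max 0 c..1}"
    using integrable_integral[OF zero_ext_integrable_on[OF rw]]
    by (simp add: omega_hat_eq_integral[OF rw])
  then have "((\<lambda>s. if s \<in> {max 0 c..1} then zero_ext \<nu> s else 0) has_integral omega_hat \<nu> (max 0 c)) {0..1}"
    by (rule has_integral_restrict_closed_subinterval[of "zero_ext \<nu>" _ "max 0 c" 1 0 1, unfolded cbox_interval])
       (use \<open>c \<le> 1\<close> in auto)
  then show ?thesis by (rule has_integral_cong[THEN iffD1, rotated]) auto
qed

lemma moment_le_omega_hat:
  assumes rw: "radial_weight \<nu>" and C: "0 \<le> C"
    and doubling: "\<forall>r\<in>{0..<1}. omega_hat \<nu> r \<le> C * omega_hat \<nu> ((1 + r) / 2)"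
    and x: "1 \<le> x"
  shows "moment \<nu> x \<le> (1 + (\<Sum>k. exp (- (2 ^ k)) * C ^ (k + 1))) * omega_hat \<nu> (1 - 1/x)"
proof -
  obtain J :: nat where J: "x < 2 ^ J" using real_arch_pow[of 2 x] by auto
  define m where "m j = max 0 (1 - 2 ^ j / x)" for j :: nat
  have m0: "m 0 = 1 - 1/x" using x by (simp add: m_def)
  have x0: "0 \<le> x" using x by simp
  define step where "step s = of_bool (1 - 1/x \<le> s) * zero_ext \<nu> s
      + (\<Sum>k<J. exp (- (2 ^ k)) * (of_bool (1 - 2 ^ Suc k / x \<le> s) * zero_ext \<nu> s))" for s
  have tail: "((\<lambda>s. of_bool (1 - 2 ^ j / x \<le> s) * zero_ext \<nu> s) has_integral omega_hat \<nu> (m j)) {0..1}"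
    for j unfolding m_def by (rule has_integral_zero_ext_upper_tail[OF rw]) (use x in auto)
  have "(step has_integral omega_hat \<nu> (m 0) + (\<Sum>k<J. exp (- (2 ^ k)) * omega_hat \<nu> (m (Suc k)))) {0..1}"
    unfolding step_def using tail[of 0]
    by (intro has_integral_add has_integral_sum has_integral_mult_right tail) auto
  moreover have "s powr x * zero_ext \<nu> s \<le> step s" if "s \<in> {0..1}" for s
  proof (cases "s = 1")
    case False
    then have "s powr x * zero_ext \<nu> s \<le> (of_bool (1 - 1/x \<le> s)
        + (\<Sum>k<J. exp (- (2 ^ k)) * of_bool (1 - 2 ^ Suc k / x \<le> s))) * zero_ext \<nu> s"
      using that x J by (intro mult_right_mono powr_le_dyadic_step_sum zero_ext_nonneg rw) auto
    also have "\<dots> = step s" unfolding step_def by (simp only: distrib_right sum_distrib_right mult.assoc)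
    finally show ?thesis .
  qed (simp add: step_def zero_ext_def)
  ultimately have "moment \<nu> x \<le> omega_hat \<nu> (m 0) + (\<Sum>k<J. exp (- (2 ^ k)) * omega_hat \<nu> (m (Suc k)))"
    unfolding moment_eq_integral[OF rw x0]
    by (rule has_integral_le[OF integrable_integral[OF moment_integrable_on[OF rw x0]]])
  also have "(\<Sum>k<J. exp (- (2 ^ k)) * omega_hat \<nu> (m (Suc k)))
      \<le> (\<Sum>k<J. exp (- (2 ^ k)) * C ^ (k + 1)) * omega_hat \<nu> (m 0)"
    unfolding sum_distrib_right
  proof (intro sum_mono)
    fix k
    have "omega_hat \<nu> (m (Suc k)) \<le> C ^ (k + 1) * omega_hat \<nu> (m 0)"
      using omega_hat_iterated_doubling[OF rw C doubling x, of "Suc k"] unfolding m0 by (simp add: m_def)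
    then show "exp (- (2 ^ k)) * omega_hat \<nu> (m (Suc k)) \<le> exp (- (2 ^ k)) * C ^ (k + 1) * omega_hat \<nu> (m 0)"
      by (simp add: mult.assoc mult_left_mono)
  qed
  also have "\<dots> \<le> (\<Sum>k. exp (- (2 ^ k)) * C ^ (k + 1)) * omega_hat \<nu> (m 0)"
    using C x unfolding m0
    by (intro mult_right_mono sum_le_suminf summable_exp_neg_two_power_mult_power omega_hat_nonneg rw) auto
  finally show ?thesis by (simp add: m0 algebra_simps)
qed

definition comparable :: "(real \<Rightarrow> real) \<Rightarrow> (real \<Rightarrow> real) \<Rightarrow> bool" where
  "comparable f g \<longleftrightarrow> (\<exists>C>0. \<forall>x\<ge>1. f x \<le> C * g x \<and> g x \<le> C * f x)"

lemma comparable_sym: "comparable f g \<Longrightarrow> comparable g f"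
  unfolding comparable_def by blast

lemma comparable_trans [trans]:
  assumes "comparable f g" "comparable g h" shows "comparable f h"
proof -
  obtain C where C: "C > 0" "\<forall>x\<ge>1. f x \<le> C * g x \<and> g x \<le> C * f x"
    using assms(1) by (auto simp: comparable_def)
  obtain D where D: "D > 0" "\<forall>x\<ge>1. g x \<le> D * h x \<and> h x \<le> D * g x"
    using assms(2) by (auto simp: comparable_def)
  have "f x \<le> (C * D) * h x \<and> h x \<le> (C * D) * f x" if "1 \<le> x" for x
  proof
    have "f x \<le> C * g x" using C that by simp
    also have "\<dots> \<le> C * (D * h x)" using C D that by (intro mult_left_mono) auto
    finally show "f x \<le> (C * D) * h x" by (simp add: mult.assoc)
    have "h x \<le> D * g x" using D that by simp
    also have "\<dots> \<le> D * (C * f x)" using C D that by (intro mult_left_mono) auto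
    finally show "h x \<le> (C * D) * f x" by (simp add: mult_ac)
  qed
  then show ?thesis unfolding comparable_def using C D by (intro exI[of _ "C * D"]) auto
qed

lemma comparable_proportional:
  assumes "0 < c" "\<forall>x\<ge>1. 0 \<le> g x \<and> f x = c * g x" shows "comparable f g"
proof -
  have "f x \<le> max c (1/c) * g x \<and> g x \<le> max c (1/c) * f x" if "1 \<le> x" for x
  proof -
    have g: "0 \<le> g x" and f: "f x = c * g x" using assms(2) that by auto
    have "c * g x \<le> max c (1/c) * g x" using g by (intro mult_right_mono) auto
    moreover have "(1/c) * f x \<le> max c (1/c) * f x" using f g assms(1) by (intro mult_right_mono) auto
    ultimately show ?thesis using f assms(1) by simp
  qed
  then show ?thesis unfolding comparable_def using assms(1) by (intro exI[of _ "max c (1/c)"]) auto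
qed

lemma comparable_powr:
  assumes "comparable f g" "\<forall>x\<ge>1. 0 \<le> f x \<and> 0 \<le> g x" "0 \<le> \<alpha>"
  shows "comparable (\<lambda>x. f x powr \<alpha>) (\<lambda>x. g x powr \<alpha>)"
proof -
  obtain C where C: "C > 0" "\<forall>x\<ge>1. f x \<le> C * g x \<and> g x \<le> C * f x"
    using assms(1) by (auto simp: comparable_def)
  have "f x powr \<alpha> \<le> C powr \<alpha> * g x powr \<alpha> \<and> g x powr \<alpha> \<le> C powr \<alpha> * f x powr \<alpha>"
    if "1 \<le> x" for x
    using C assms(2,3) that by (auto simp: powr_mult[symmetric] intro!: powr_mono2)
  then show ?thesis unfolding comparable_def using C(1) by (intro exI[of _ "C powr \<alpha>"]) auto
qed

lemma moment_comparable_omega_hat: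
  assumes "D_hat \<nu>" shows "comparable (moment \<nu>) (\<lambda>x. omega_hat \<nu> (1 - 1/x))"
proof -
  have rw: "radial_weight \<nu>" using assms by (simp add: D_hat_def)
  obtain C where C: "0 < C" and doubling: "\<forall>r\<in>{0..<1}. omega_hat \<nu> r \<le> C * omega_hat \<nu> ((1 + r) / 2)"
    using assms by (auto simp: D_hat_def)
  define K where "K = max (C * exp 1) (1 + (\<Sum>k. exp (- (2 ^ k)) * C ^ (k + 1)))"
  have "moment \<nu> x \<le> K * omega_hat \<nu> (1 - 1/x) \<and> omega_hat \<nu> (1 - 1/x) \<le> K * moment \<nu> x"
    if x: "1 \<le> x" for x
  proof
    have "moment \<nu> x \<le> (1 + (\<Sum>k. exp (- (2 ^ k)) * C ^ (k + 1))) * omega_hat \<nu> (1 - 1/x)"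
      using C by (intro moment_le_omega_hat rw doubling x) auto
    also have "\<dots> \<le> K * omega_hat \<nu> (1 - 1/x)"
      using x by (intro mult_right_mono omega_hat_nonneg rw) (auto simp: K_def)
    finally show "moment \<nu> x \<le> K * omega_hat \<nu> (1 - 1/x)" .
    have "omega_hat \<nu> (1 - 1/x) \<le> C * exp 1 * moment \<nu> x"
      using C by (intro omega_hat_le_moment rw doubling x) auto
    also have "\<dots> \<le> K * moment \<nu> x"
      using x by (intro mult_right_mono moment_nonneg rw) (auto simp: K_def)
    finally show "omega_hat \<nu> (1 - 1/x) \<le> K * moment \<nu> x" .
  qed
  moreover have "0 < K" using C by (simp add: K_def less_max_iff_disj)
  ultimately show ?thesis unfolding comparable_def by blast
qed

section \<open>Substitution along the tail\<close>

lemma borel_measurable_omega_hat_clamped [measurable]: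
  assumes "radial_weight \<nu>"
  shows "(\<lambda>s. omega_hat \<nu> (max 0 (min 1 s))) \<in> borel_measurable borel"
proof (rule borel_measurable_continuous_onI)
  show "continuous_on UNIV (\<lambda>s. omega_hat \<nu> (max 0 (min 1 s)))"
    by (rule continuous_on_compose2[OF continuous_on_omega_hat[OF assms]])
       (auto intro!: continuous_intros)
qed

lemma nn_integral_zero_ext_interval:
  assumes rw: "radial_weight \<nu>" and "0 \<le> a" "a \<le> b" "b \<le> 1"
  shows "(\<integral>\<^sup>+ s. ennreal (indicator {a..<b} s * zero_ext \<nu> s) \<partial>lborel)
           = ennreal (omega_hat \<nu> a - omega_hat \<nu> b)"
proof -
  have "(\<integral>\<^sup>+ s. ennreal (indicator {a..<b} s * zero_ext \<nu> s) \<partial>lborel)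
      = (\<integral>\<^sup>+ s. ennreal (indicator {a..b} s * zero_ext \<nu> s) \<partial>lborel)"
    by (rule nn_integral_cong_AE)
       (use AE_lborel_singleton[of b] in \<open>eventually_elim, auto simp: indicator_def\<close>)
  also have "\<dots> = ennreal (omega_hat \<nu> a - omega_hat \<nu> b)"
  proof (rule nn_integral_has_integral_lebesgue)
    show "0 \<le> zero_ext \<nu> s" for s by (rule zero_ext_nonneg[OF rw])
    show "(zero_ext \<nu> has_integral (omega_hat \<nu> a - omega_hat \<nu> b)) {a..b}"
      using integrable_integral[OF zero_ext_integrable_on[OF rw]] omega_hat_split[OF assms] by simp
  qed
  finally show ?thesis .
qed

lemma omega_hat_level_point:
  assumes rw: "radial_weight \<nu>" and r: "0 \<le> r" "r \<le> 1" and t: "0 \<le> t" "t < omega_hat \<nu> r"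
  obtains c where "r \<le> c" "c \<le> 1" "omega_hat \<nu> c = t"
    "{s \<in> {r..<1}. t < omega_hat \<nu> s} = {r..<c}"
proof -
  have cont: "continuous_on {r..1} (omega_hat \<nu>)"
    by (rule continuous_on_subset[OF continuous_on_omega_hat[OF rw]]) (use r in auto)
  define S where "S = {s \<in> {r..1}. omega_hat \<nu> s \<le> t}"
  have "closed S" unfolding S_def
    by (intro continuous_on_closed_Collect_le cont continuous_on_const) auto
  moreover have "1 \<in> S" using r t by (auto simp: S_def)
  moreover have "bdd_below S" by (auto simp: S_def bdd_below_def)
  ultimately have "Inf S \<in> S" using closed_contains_Inf by blast
  define c where "c = Inf S"
  have c: "r \<le> c" "c \<le> 1" "omega_hat \<nu> c \<le> t"
    using \<open>Inf S \<in> S\<close> by (auto simp: S_def c_def)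
  have S_ge_c: "c \<le> s" if "s \<in> S" for s
    unfolding c_def using that by (intro cInf_lower) (auto simp: S_def bdd_below_def)
  obtain d where d: "r \<le> d" "d \<le> c" "omega_hat \<nu> d = t"
    using IVT2'[of "omega_hat \<nu>" c t r] c t continuous_on_subset[OF cont, of "{r..c}"] by auto
  then have "c \<le> d" using c by (intro S_ge_c) (auto simp: S_def)
  then have c_level: "omega_hat \<nu> c = t" using d by auto
  have "{s \<in> {r..<1}. t < omega_hat \<nu> s} = {r..<c}"
  proof (intro equalityI subsetI)
    fix s assume s: "s \<in> {s \<in> {r..<1}. t < omega_hat \<nu> s}"
    have "\<not> c \<le> s"
    proof
      assume "c \<le> s"
      then have "omega_hat \<nu> s \<le> omega_hat \<nu> c" using s c r by (intro omega_hat_antimono rw) auto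
      then show False using s c_level by auto
    qed
    then show "s \<in> {r..<c}" using s by auto
  next
    fix s assume s: "s \<in> {r..<c}"
    then have "s \<notin> S" using S_ge_c by force
    then show "s \<in> {s \<in> {r..<1}. t < omega_hat \<nu> s}" using s c by (auto simp: S_def)
  qed
  then show ?thesis using that c c_level by blast
qed

lemma omega_hat_superlevel_set:
  assumes rw: "radial_weight \<nu>" and r: "0 \<le> r" "r \<le> 1"
  obtains c where "r \<le> c" "c \<le> 1" "omega_hat \<nu> c = max 0 (min t (omega_hat \<nu> r))"
    "{s \<in> {r..<1}. t < omega_hat \<nu> s} = {r..<c}"
proof -
  consider "t < 0" | "omega_hat \<nu> r \<le> t" | "0 \<le> t" "t < omega_hat \<nu> r" by linarith
  then show ?thesis
  proof cases
    case 1
    have "t < omega_hat \<nu> s" if "r \<le> s" for s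
      using 1 omega_hat_nonneg[OF rw, of s] r that by linarith
    then have "{s \<in> {r..<1}. t < omega_hat \<nu> s} = {r..<1}" by auto
    then show ?thesis using that[of 1] 1 r by simp
  next
    case 2
    have "omega_hat \<nu> s \<le> t" if "r \<le> s" "s < 1" for s
      using 2 omega_hat_antimono[OF rw r(1), of s] that by linarith
    then have "{s \<in> {r..<1}. t < omega_hat \<nu> s} = {}" by fastforce
    then show ?thesis using that[of r] 2 r omega_hat_nonneg[OF rw r(1)] by simp
  next
    case 3
    then show ?thesis using that omega_hat_level_point[OF rw r 3] by (metis max_absorb2 min_absorb1 less_imp_le)
  qed
qed

lemma emeasure_lborel_Icc_Int_greaterThan:
  fixes R t :: real assumes "0 \<le> R"
  shows "emeasure lborel ({0..R} \<inter> {t<..}) = ennreal (R - max 0 (min t R))"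
proof -
  consider "t < 0" | "0 \<le> t" "t < R" | "R \<le> t" by linarith
  then show ?thesis
  proof cases
    case 1
    then have "{0..R} \<inter> {t<..} = {0..R}" by auto
    then show ?thesis using 1 assms by simp
  next
    case 2
    then have "{0..R} \<inter> {t<..} = {t<..R}" by auto
    then show ?thesis using 2 by simp
  next
    case 3
    then have "{0..R} \<inter> {t<..} = {}" by auto
    then show ?thesis using 3 assms by simp
  qed
qed

(* The tail is clamped to [0,1] only to make the map Borel measurable on the whole line. *)
lemma distr_omega_hat:
  assumes rw: "radial_weight \<nu>" and r: "0 \<le> r" "r \<le> 1"
  shows "distr (density lborel (\<lambda>s. ennreal (indicator {r..<1} s * zero_ext \<nu> s))) borel
           (\<lambda>s. omega_hat \<nu> (max 0 (min 1 s)))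
         = density lborel (indicator {0..omega_hat \<nu> r})"
proof -
  define M where "M = density lborel (\<lambda>s. ennreal (indicator {r..<1} s * zero_ext \<nu> s))"
  define H where "H s = omega_hat \<nu> (max 0 (min 1 s))" for s
  define R where "R = omega_hat \<nu> r"
  have R: "0 \<le> R" unfolding R_def by (rule omega_hat_nonneg[OF rw r(1)])
  have [measurable]: "H \<in> borel_measurable borel" "zero_ext \<nu> \<in> borel_measurable borel"
    using rw unfolding H_def by measurable
  have "emeasure (distr M borel H) {t<..} = ennreal (R - max 0 (min t R))" for t
  proof -
    obtain c where c: "r \<le> c" "c \<le> 1" "omega_hat \<nu> c = max 0 (min t R)"
      "{s \<in> {r..<1}. t < omega_hat \<nu> s} = {r..<c}"
      using omega_hat_superlevel_set[OF rw r] unfolding R_def by blast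
    have "emeasure (distr M borel H) {t<..} = emeasure M (H -` {t<..})"
      by (subst emeasure_distr) (auto simp: M_def)
    also have "\<dots> = (\<integral>\<^sup>+ s. ennreal (indicator {r..<1} s * zero_ext \<nu> s) * indicator (H -` {t<..}) s \<partial>lborel)"
      unfolding M_def using measurable_sets[of H borel borel "{t<..}"]
      by (subst emeasure_density) auto
    also have "\<dots> = (\<integral>\<^sup>+ s. ennreal (indicator {s \<in> {r..<1}. t < omega_hat \<nu> s} s * zero_ext \<nu> s) \<partial>lborel)"
      using r by (intro nn_integral_cong) (auto simp: indicator_def H_def)
    also have "\<dots> = ennreal (R - max 0 (min t R))"
      unfolding c(4) using nn_integral_zero_ext_interval[OF rw r(1) c(1,2)] c(3) by (simp add: R_def)
    finally show ?thesis .
  qed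
  moreover have "emeasure (density lborel (indicator {0..R})) {t<..} = ennreal (R - max 0 (min t R))" for t
    using emeasure_lborel_Icc_Int_greaterThan[OF R]
    by (subst emeasure_density) (auto simp: indicator_inter_arith[symmetric])
  ultimately show ?thesis
    unfolding M_def[symmetric] H_def[symmetric] R_def[symmetric]
    by (intro measure_eqI_lessThan) auto
qed

lemma nn_integral_omega_hat_substitution:
  assumes rw: "radial_weight \<nu>" and r: "0 \<le> r" "r \<le> 1" and g [measurable]: "g \<in> borel_measurable borel"
  shows "(\<integral>\<^sup>+ s. ennreal (indicator {r..<1} s * \<nu> s) * g (omega_hat \<nu> s) \<partial>lborel)
           = (\<integral>\<^sup>+ t. indicator {0..omega_hat \<nu> r} t * g t \<partial>lborel)"
proof -
  define H where "H s = omega_hat \<nu> (max 0 (min 1 s))" for s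
  have [measurable]: "H \<in> borel_measurable borel" "zero_ext \<nu> \<in> borel_measurable borel"
    using rw unfolding H_def by measurable
  have "(\<integral>\<^sup>+ s. ennreal (indicator {r..<1} s * \<nu> s) * g (omega_hat \<nu> s) \<partial>lborel)
      = (\<integral>\<^sup>+ s. ennreal (indicator {r..<1} s * zero_ext \<nu> s) * g (H s) \<partial>lborel)"
    using r by (intro nn_integral_cong) (auto simp: indicator_def zero_ext_def H_def)
  also have "\<dots> = (\<integral>\<^sup>+ s. g (H s) \<partial>density lborel (\<lambda>s. ennreal (indicator {r..<1} s * zero_ext \<nu> s)))"
    by (subst nn_integral_density) auto
  also have "\<dots> = (\<integral>\<^sup>+ t. g t \<partial>distr (density lborel (\<lambda>s. ennreal (indicator {r..<1} s * zero_ext \<nu> s))) borel H)"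
    by (subst nn_integral_distr) auto
  also have "\<dots> = (\<integral>\<^sup>+ t. indicator {0..omega_hat \<nu> r} t * g t \<partial>lborel)"
    unfolding H_def distr_omega_hat[OF rw r] by (subst nn_integral_density) auto
  finally show ?thesis .
qed

section \<open>The weight \<omega> times a power of its tail\<close>

lemma has_bochner_integral_power_weight:
  assumes rw: "radial_weight \<nu>" and "0 < \<alpha>" and r: "0 \<le> r" "r \<le> 1"
  shows "has_bochner_integral lborel
           (\<lambda>s. indicator {r..<1} s *\<^sub>R (\<nu> s * omega_hat \<nu> s powr (\<alpha> - 1)))
           (omega_hat \<nu> r powr \<alpha> / \<alpha>)"
proof (rule has_bochner_integral_nn_integral)
  define H where "H s = omega_hat \<nu> (max 0 (min 1 s))" for s
  have [measurable]: "H \<in> borel_measurable borel" "zero_ext \<nu> \<in> borel_measurable borel"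
    using rw unfolding H_def by measurable
  have "(\<lambda>s. indicator {r..<1} s *\<^sub>R (\<nu> s * omega_hat \<nu> s powr (\<alpha> - 1)))
      = (\<lambda>s. indicator {r..<1} s * zero_ext \<nu> s * H s powr (\<alpha> - 1))"
    using r by (auto simp: indicator_def zero_ext_def H_def)
  then show "(\<lambda>s. indicator {r..<1} s *\<^sub>R (\<nu> s * omega_hat \<nu> s powr (\<alpha> - 1))) \<in> borel_measurable lborel"
    by simp
  show "AE s in lborel. 0 \<le> indicator {r..<1} s *\<^sub>R (\<nu> s * omega_hat \<nu> s powr (\<alpha> - 1))"
    using rw r by (intro AE_I2) (auto simp: indicator_def radial_weight_def)
  show "0 \<le> omega_hat \<nu> r powr \<alpha> / \<alpha>" using \<open>0 < \<alpha>\<close> by simp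
  have "(\<integral>\<^sup>+ s. ennreal (indicator {r..<1} s *\<^sub>R (\<nu> s * omega_hat \<nu> s powr (\<alpha> - 1))) \<partial>lborel)
      = (\<integral>\<^sup>+ s. ennreal (indicator {r..<1} s * \<nu> s) * ennreal (omega_hat \<nu> s powr (\<alpha> - 1)) \<partial>lborel)"
    by (intro nn_integral_cong) (simp add: ennreal_mult''[symmetric] mult.assoc)
  also have "\<dots> = (\<integral>\<^sup>+ t. indicator {0..omega_hat \<nu> r} t * ennreal (t powr (\<alpha> - 1)) \<partial>lborel)"
    by (rule nn_integral_omega_hat_substitution[OF rw r]) simp
  also have "\<dots> = (\<integral>\<^sup>+ t. ennreal (indicator {0..omega_hat \<nu> r} t * t powr (\<alpha> - 1)) \<partial>lborel)"
    by (intro nn_integral_cong) (auto simp: indicator_def)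
  also have "\<dots> = ennreal (omega_hat \<nu> r powr \<alpha> / \<alpha>)"
    using has_integral_powr_from_0[of "\<alpha> - 1" "omega_hat \<nu> r"] \<open>0 < \<alpha>\<close> omega_hat_nonneg[OF rw r(1)]
    by (intro nn_integral_has_integral_lebesgue) auto
  finally show "(\<integral>\<^sup>+ s. ennreal (indicator {r..<1} s *\<^sub>R (\<nu> s * omega_hat \<nu> s powr (\<alpha> - 1))) \<partial>lborel)
      = ennreal (omega_hat \<nu> r powr \<alpha> / \<alpha>)" .
qed

lemma omega_hat_power_weight:
  assumes "radial_weight \<nu>" "0 < \<alpha>" "0 \<le> r" "r \<le> 1"
  shows "omega_hat (\<lambda>s. \<nu> s * omega_hat \<nu> s powr (\<alpha> - 1)) r = omega_hat \<nu> r powr \<alpha> / \<alpha>"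
  unfolding omega_hat_def[of "\<lambda>s. \<nu> s * omega_hat \<nu> s powr (\<alpha> - 1)"] set_lebesgue_integral_def
  using has_bochner_integral_power_weight[OF assms] by (rule has_bochner_integral_integral_eq)

lemma radial_weight_power_weight:
  assumes rw: "radial_weight \<nu>" and "0 < \<alpha>"
  shows "radial_weight (\<lambda>s. \<nu> s * omega_hat \<nu> s powr (\<alpha> - 1))"
  unfolding radial_weight_def
proof (intro conjI ballI)
  show "0 \<le> \<nu> r * omega_hat \<nu> r powr (\<alpha> - 1)" if "r \<in> {0..<1}" for r
    using rw that by (simp add: radial_weight_def)
  show "set_integrable lborel {0..<1} (\<lambda>s. \<nu> s * omega_hat \<nu> s powr (\<alpha> - 1))"
    unfolding set_integrable_def
    using has_bochner_integral_power_weight[OF rw \<open>0 < \<alpha>\<close>, of 0] by (auto dest: integrable.intros)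
  show "0 < omega_hat (\<lambda>s. \<nu> s * omega_hat \<nu> s powr (\<alpha> - 1)) r" if "r \<in> {0..<1}" for r
  proof -
    have "0 < omega_hat \<nu> r" using rw that by (simp add: radial_weight_def)
    then show ?thesis using rw that \<open>0 < \<alpha>\<close> by (simp add: omega_hat_power_weight)
  qed
qed

lemma D_hat_power_weight:
  assumes "D_hat \<nu>" "0 < \<alpha>"
  shows "D_hat (\<lambda>s. \<nu> s * omega_hat \<nu> s powr (\<alpha> - 1))"
proof -
  have rw: "radial_weight \<nu>" using assms(1) by (simp add: D_hat_def)
  obtain C where C: "0 < C" and doubling: "\<forall>r\<in>{0..<1}. omega_hat \<nu> r \<le> C * omega_hat \<nu> ((1 + r) / 2)"
    using assms(1) by (auto simp: D_hat_def)
  have "omega_hat \<nu> r powr \<alpha> / \<alpha> \<le> C powr \<alpha> * (omega_hat \<nu> ((1 + r) / 2) powr \<alpha> / \<alpha>)"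
    if r: "r \<in> {0..<1}" for r
  proof -
    have "omega_hat \<nu> r powr \<alpha> \<le> (C * omega_hat \<nu> ((1 + r) / 2)) powr \<alpha>"
      using doubling r assms(2) by (intro powr_mono2 omega_hat_nonneg rw) auto
    also have "\<dots> = C powr \<alpha> * omega_hat \<nu> ((1 + r) / 2) powr \<alpha>"
      using C r omega_hat_nonneg[OF rw] by (simp add: powr_mult)
    finally show ?thesis using assms(2) by (simp add: divide_right_mono)
  qed
  then show ?thesis
    unfolding D_hat_def using C assms(2)
    by (auto simp: radial_weight_power_weight[OF rw] omega_hat_power_weight[OF rw] intro!: exI[of _ "C powr \<alpha>"])
qed

theorem lemma2p1:
  fixes \<omega> :: "real \<Rightarrow> real" and \<alpha> :: real
  assumes "D_hat \<omega>" and "\<alpha> > 0"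
  defines "\<mu> \<equiv> (\<lambda>r. \<omega> r * omega_hat \<omega> r powr (\<alpha> - 1))"
  shows "D_hat \<mu> \<and>
    (\<exists>C>0. \<forall>x\<ge>1. moment \<mu> x \<le> C * moment \<omega> x powr \<alpha> \<and>
                    moment \<omega> x powr \<alpha> \<le> C * moment \<mu> x)"
proof
  have \<omega>: "radial_weight \<omega>" using assms(1) by (simp add: D_hat_def)
  show "D_hat \<mu>" unfolding \<mu>_def using assms(1,2) by (rule D_hat_power_weight)
  then have "comparable (moment \<mu>) (\<lambda>x. omega_hat \<mu> (1 - 1/x))"
    by (rule moment_comparable_omega_hat)
  also have "comparable \<dots> (\<lambda>x. omega_hat \<omega> (1 - 1/x) powr \<alpha>)"
    using assms(2) \<omega> unfolding \<mu>_def
    by (intro comparable_proportional[of "1/\<alpha>"]) (auto simp: omega_hat_power_weight)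
  also have "comparable \<dots> (\<lambda>x. moment \<omega> x powr \<alpha>)"
  proof (rule comparable_sym, intro comparable_powr moment_comparable_omega_hat)
    show "\<forall>x\<ge>1. 0 \<le> moment \<omega> x \<and> 0 \<le> omega_hat \<omega> (1 - 1/x)"
      using \<omega> by (auto intro: moment_nonneg omega_hat_nonneg)
  qed (use assms in auto)
  finally show "\<exists>C>0. \<forall>x\<ge>1. moment \<mu> x \<le> C * moment \<omega> x powr \<alpha> \<and>
                    moment \<omega> x powr \<alpha> \<le> C * moment \<mu> x"
    unfolding comparable_def .
qed

end
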